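(* For every $n\ge 2$, the minimum size of a string attractor of the prefix $\mathbf{pd}[0..n-1]$ of the period-doubling sequence is $2$.
   Context: The period-doubling sequence $\mathbf{pd}=\mathtt{101110101011}\cdots$ is the infinite fixed point, starting with $1$, of the morphism $1\mapsto 10$, $0\mapsto 11$; it is indexed starting at $0$, and $\mathbf{pd}[0..n-1]$ is its length-$n$ prefix. A string attractor of a finite word $w=w[0..n-1]$ is a set $S\subseteq\{0,\ldots,n-1\}$ such that every nonempty factor $f$ of $w$ has an occurrence $w[p..q]=f$ with $p\le i\le q$ for some $i\in S$. *)

theory Defs
  imports Main
begin

fun pd_img :: "nat \<Rightarrow> nat list" where
  "pd_img a = (if a = 1 then [1, 0] else [1, 1])"

definition pd_morph :: "nat list \<Rightarrow> nat list" where
  "pd_morph w = concat (map pd_img w)"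

text \<open>The infinite fixed point starting with 1: its letter at index i is the i-th letter of
  pd_morph^(i+1) [1], which has length 2^(i+1) > i and is a prefix of the fixed point.\<close>
definition pd :: "nat \<Rightarrow> nat" where
  "pd i = ((pd_morph ^^ (Suc i)) [1]) ! i"

definition pd_prefix :: "nat \<Rightarrow> nat list" where
  "pd_prefix n = map pd [0..<n]"

definition factor_at :: "'a list \<Rightarrow> nat \<Rightarrow> nat \<Rightarrow> 'a list" where
  "factor_at w p q = take (Suc q - p) (drop p w)"

definition string_attractor :: "'a list \<Rightarrow> nat set \<Rightarrow> bool" where
  "string_attractor w S \<longleftrightarrow> S \<subseteq> {0..<length w} \<and>
     (\<forall>p q. p \<le> q \<and> q < length w \<longrightarrow>
        (\<exists>p' q' i. p' \<le> q' \<and> q' < length w \<and> factor_at w p' q' = factor_at w p q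
                 \<and> i \<in> S \<and> p' \<le> i \<and> i \<le> q'))"

definition min_attractor_size :: "'a list \<Rightarrow> nat" where
  "min_attractor_size w = (LEAST k. \<exists>S. string_attractor w S \<and> card S = k)"

end

theory Submission
  imports Defs "HOL-Number_Theory.Cong"
begin

text \<open>
  The letter pd x is 1 exactly when the 2-adic valuation of x + 1 is even, and at positions of
  valuation below M it depends only on x modulo 2^M. A window [p, q] contains exactly one position
  x (its dyadic peak) whose successor is divisible by the largest power 2^M occurring there, so the
  factor pd[p..q] reappears around every y such that 2^M divides y + 1 and pd y = pd x. For
  2^(k+1) \<le> n < 2^(k+2) the positions 2^k - 1 and 2^(k+1) - 1 supply both parities of the
  valuation with enough room around them. When k > 0 and n < 3 * 2^k the second one is replaced by
  3 * 2^(k-1) - 1; a window with peak 2^(k+1) - 1 starting to the right of it is moved there by a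
  shift of 2^(k-1), under which pd is invariant on that range. Conversely both letters occur, and
  each needs its own attractor position.
\<close>

lemma card_set_le_string_attractor:
  assumes "string_attractor w S"
  shows "card (set w) \<le> card S"
proof -
  from assms have sub: "S \<subseteq> {0..<length w}"
    and occ: "\<And>p q. p \<le> q \<Longrightarrow> q < length w \<Longrightarrow> \<exists>p' q' s. p' \<le> q' \<and> q' < length w \<and>
      factor_at w p' q' = factor_at w p q \<and> s \<in> S \<and> p' \<le> s \<and> s \<le> q'"
    unfolding string_attractor_def by blast+
  from sub have "finite S"
    by (rule finite_subset) simp
  have single: "factor_at w i i = [w ! i]" if "i < length w" for i
    using that by (simp add: factor_at_def take_Suc_conv_app_nth)
  have "set w \<subseteq> (\<lambda>s. w ! s) ` S"
  proof
    fix a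
    assume "a \<in> set w"
    then obtain i where i: "i < length w" "a = w ! i"
      by (auto simp: in_set_conv_nth)
    with occ[of i i] single obtain p' q' s where "q' < length w" "factor_at w p' q' = [a]"
      and s: "s \<in> S" "p' \<le> s" "s \<le> q'"
      by auto
    have "length (factor_at w p' q') = Suc q' - p'"
      using \<open>q' < length w\<close> s by (simp add: factor_at_def)
    with \<open>factor_at w p' q' = [a]\<close> s have "p' = s" "q' = s"
      by simp_all
    with \<open>q' < length w\<close> \<open>factor_at w p' q' = [a]\<close> single have "w ! s = a"
      by simp
    with s(1) show "a \<in> (\<lambda>s. w ! s) ` S"
      by blast
  qed
  then have "card (set w) \<le> card ((\<lambda>s. w ! s) ` S)"
    using \<open>finite S\<close> by (intro card_mono) simp_all
  also have "\<dots> \<le> card S"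
    using \<open>finite S\<close> by (rule card_image_le)
  finally show ?thesis .
qed

function pd_rec :: "nat \<Rightarrow> nat" where
  "pd_rec i = (if even i then 1 else 1 - pd_rec (i div 2))"
  by auto
termination
  by (relation "measure id") (auto elim: oddE)

declare pd_rec.simps [simp del]

lemma pd_img_pd_rec: "pd_img (pd_rec j) = [pd_rec (2 * j), pd_rec (Suc (2 * j))]"
proof -
  have "pd_rec (2 * j) = 1" "pd_rec (Suc (2 * j)) = 1 - pd_rec j"
    by (subst pd_rec.simps; simp)+
  moreover have "pd_rec j \<le> 1"
    by (subst pd_rec.simps) simp
  ultimately show ?thesis
    by auto
qed

lemma pd_morph_map_pd_rec: "pd_morph (map pd_rec [0..<N]) = map pd_rec [0..<2 * N]"
proof (induction N)
  case (Suc N)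
  have "map pd_rec [0..<2 * Suc N] = map pd_rec [0..<2 * N] @ [pd_rec (2 * N), pd_rec (Suc (2 * N))]"
    by simp
  with Suc show ?case
    by (simp add: pd_morph_def pd_img_pd_rec del: pd_img.simps)
qed (simp add: pd_morph_def)

lemma funpow_pd_morph_one: "(pd_morph ^^ m) [1] = map pd_rec [0..<2 ^ m]"
proof (induction m)
  case 0
  then show ?case by (simp add: pd_rec.simps)
next
  case (Suc m)
  then show ?case by (simp add: pd_morph_map_pd_rec)
qed

lemma pd_eq_pd_rec: "pd = pd_rec"
proof
  fix i :: nat
  have "i < 2 ^ Suc i"
    using less_exp[of "Suc i"] by linarith
  then show "pd i = pd_rec i"
    unfolding pd_def funpow_pd_morph_one by simp
qed

lemma pd_double: "pd (2 * j) = 1"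
  by (simp add: pd_eq_pd_rec pd_rec.simps)

lemma pd_Suc_double: "pd (Suc (2 * j)) = 1 - pd j"
  by (subst pd_eq_pd_rec, subst pd_rec.simps) (simp add: pd_eq_pd_rec)

lemma pd_cong:
  assumes "[i = j] (mod 2 ^ m)" and "\<not> 2 ^ m dvd Suc i"
  shows "pd i = pd j"
  using assms
proof (induction m arbitrary: i j)
  case 0
  then show ?case by simp
next
  case (Suc m)
  have "[i = j] (mod 2)"
    using Suc.prems(1) by (rule cong_dvd_modulus_nat) simp
  then have parity: "even i \<longleftrightarrow> even j"
    by (metis cong_def even_iff_mod_2_eq_zero)
  show ?case
  proof (cases "even i")
    case True
    with parity show ?thesis
      by (auto elim!: evenE simp: pd_double)
  next
    case False
    with parity obtain a b where ab: "i = Suc (2 * a)" "j = Suc (2 * b)"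
      by (metis oddE Suc_eq_plus1)
    have "[a = b] (mod 2 ^ m)"
      using Suc.prems(1) unfolding ab cong_def by (simp add: mod_mult2_eq)
    moreover have "\<not> 2 ^ m dvd Suc a"
    proof
      assume "2 ^ m dvd Suc a"
      then have "2 * 2 ^ m dvd 2 * Suc a"
        by (rule mult_dvd_mono[OF dvd_refl])
      then have "2 ^ Suc m dvd Suc i"
        unfolding ab by simp
      with Suc.prems(2) show False ..
    qed
    ultimately show ?thesis
      using Suc.IH unfolding ab by (simp add: pd_Suc_double)
  qed
qed

lemma pd_pow2_mult_odd:
  assumes "odd u"
  shows "pd (2 ^ m * u - 1) = (if even m then 1 else 0)"
proof (induction m)
  case 0
  from assms show ?case
    by (auto elim!: oddE simp: pd_double)
next
  case (Suc m)
  have "0 < 2 ^ m * u"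
    using assms by (simp add: odd_pos)
  moreover have "2 ^ Suc m * u = 2 * (2 ^ m * u)"
    by simp
  ultimately have "2 ^ Suc m * u - 1 = Suc (2 * (2 ^ m * u - 1))"
    by linarith
  with Suc show ?case
    by (simp add: pd_Suc_double)
qed

lemma pd_add_pow2_eq:
  assumes "2 * 2 ^ k \<le> j" "Suc j < 5 * 2 ^ k"
  shows "pd (j + 2 ^ k) = pd j"
proof (cases "2 ^ k dvd Suc j")
  case False
  have "[j = j + 2 ^ k] (mod 2 ^ k)"
    by (simp add: cong_def)
  with False show ?thesis
    by (simp add: pd_cong)
next
  case True
  then obtain c where c: "Suc j = 2 ^ k * c" ..
  with assms have "2 ^ k * 2 < 2 ^ k * c" "2 ^ k * c < 2 ^ k * 5"
    by linarith+
  then have "c = 3 \<or> c = 4"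
    by (simp only: mult_less_cancel1) auto
  have pd3: "pd (2 ^ k * 3 - 1) = (if even k then 1 else 0)"
    and pd4: "pd (2 ^ (k + 2) * 1 - 1) = (if even k then 1 else 0)"
    and pd5: "pd (2 ^ k * 5 - 1) = (if even k then 1 else 0)"
    by (subst pd_pow2_mult_odd; simp)+
  from \<open>c = 3 \<or> c = 4\<close> show ?thesis
  proof
    assume "c = 3"
    with c have "j = 2 ^ k * 3 - 1" "j + 2 ^ k = 2 ^ (k + 2) * 1 - 1"
      by simp_all
    then show ?thesis
      by (simp only: pd3 pd4)
  next
    assume "c = 4"
    with c have "j = 2 ^ (k + 2) * 1 - 1" "j + 2 ^ k = 2 ^ k * 5 - 1"
      by simp_all
    then show ?thesis
      by (simp only: pd4 pd5)
  qed
qed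

lemma pow2_dvd_between:
  fixes a b :: nat
  assumes "2 ^ M dvd a" "2 ^ M dvd b" "a \<noteq> b"
  obtains c where "min a b \<le> c" "c \<le> max a b" "2 ^ Suc M dvd c"
proof -
  have "\<exists>c. min a b \<le> c \<and> c \<le> max a b \<and> 2 ^ Suc M dvd c"
    using assms
  proof (induction a b rule: linorder_wlog)
    case (le a b)
    obtain \<alpha> \<beta> where \<alpha>: "a = 2 ^ M * \<alpha>" and \<beta>: "b = 2 ^ M * \<beta>"
      using le.prems(1,2) by (elim dvdE)
    with le have "\<alpha> < \<beta>"
      by simp
    show ?case
    proof (cases "even \<alpha>")
      case True
      then obtain \<gamma> where "\<alpha> = 2 * \<gamma>" ..
      with \<alpha> le.hyps show ?thesis
        by (intro exI[of _ a]) simp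
    next
      case False
      then have "even (\<alpha> + 1)"
        by simp
      then obtain \<gamma> where "\<alpha> + 1 = 2 * \<gamma>" ..
      then have "2 ^ Suc M dvd 2 ^ M * (\<alpha> + 1)"
        by simp
      moreover have "a \<le> 2 ^ M * (\<alpha> + 1)" "2 ^ M * (\<alpha> + 1) \<le> b"
        using \<alpha> \<beta> \<open>\<alpha> < \<beta>\<close> by (simp_all del: mult_Suc_right add: Suc_leI)
      ultimately show ?thesis
        using le.hyps by (intro exI[of _ "2 ^ M * (\<alpha> + 1)"]) simp
    qed
  next
    case (sym a b)
    then show ?case
      by (simp add: min.commute max.commute)
  qed
  with that show ?thesis
    by blast
qed

lemma pow2_dvd_Suc_le:
  assumes "2 ^ m dvd Suc j"
  shows "m \<le> j"
proof -
  from assms have "2 ^ m \<le> Suc j"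
    by (rule dvd_imp_le) simp
  with less_exp[of m] show ?thesis
    by linarith
qed

lemma pow2_dvd_Suc_unique:
  assumes maximal: "\<And>j. p \<le> j \<Longrightarrow> j \<le> q \<Longrightarrow> \<not> 2 ^ Suc M dvd Suc j"
    and "p \<le> x" "x \<le> q" "p \<le> j" "j \<le> q" "2 ^ M dvd Suc x" "2 ^ M dvd Suc j"
  shows "j = x"
proof (rule ccontr)
  assume "j \<noteq> x"
  then have "Suc j \<noteq> Suc x"
    by simp
  then obtain c where c: "min (Suc j) (Suc x) \<le> c" "c \<le> max (Suc j) (Suc x)" "2 ^ Suc M dvd c"
    using assms(6,7) pow2_dvd_between by metis
  moreover from assms(2-5) have "Suc p \<le> min (Suc j) (Suc x)" "max (Suc j) (Suc x) \<le> Suc q"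
    by simp_all
  ultimately have "p \<le> c - 1" "c - 1 \<le> q" "Suc (c - 1) = c"
    by linarith+
  with c(3) maximal[of "c - 1"] show False
    by simp
qed

definition dyadic_peak :: "nat \<Rightarrow> nat \<Rightarrow> nat \<Rightarrow> nat \<Rightarrow> bool" where
  "dyadic_peak p q M x \<longleftrightarrow> p \<le> x \<and> x \<le> q \<and> 2 ^ M dvd Suc x \<and> \<not> 2 ^ Suc M dvd Suc x \<and>
     (\<forall>j. p \<le> j \<longrightarrow> j \<le> q \<longrightarrow> j \<noteq> x \<longrightarrow> \<not> 2 ^ M dvd Suc j)"

lemma dyadic_peak_exists:
  assumes "p \<le> q"
  obtains M x where "dyadic_peak p q M x"
proof -
  define D where "D = {m. \<exists>j\<in>{p..q}. 2 ^ m dvd Suc j}"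
  have "D \<subseteq> {..q}"
  proof
    fix m
    assume "m \<in> D"
    then obtain j where "j \<le> q" "2 ^ m dvd Suc j"
      unfolding D_def by auto
    then show "m \<in> {..q}"
      using pow2_dvd_Suc_le by fastforce
  qed
  then have "finite D"
    by (rule finite_subset) simp
  have "0 \<in> D"
    using assms unfolding D_def by auto
  define M where "M = Max D"
  have "M \<in> D"
    unfolding M_def using \<open>finite D\<close> \<open>0 \<in> D\<close> by (intro Max_in) auto
  then obtain x where x: "p \<le> x" "x \<le> q" "2 ^ M dvd Suc x"
    unfolding D_def by auto
  have maximal: "\<not> 2 ^ Suc M dvd Suc j" if "p \<le> j" "j \<le> q" for j
  proof
    assume "2 ^ Suc M dvd Suc j"
    with that have "Suc M \<in> D"
      unfolding D_def by auto
    with \<open>finite D\<close> have "Suc M \<le> M"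
      unfolding M_def by (rule Max_ge)
    then show False
      by simp
  qed
  have unique: "\<not> 2 ^ M dvd Suc j" if "p \<le> j" "j \<le> q" "j \<noteq> x" for j
    using pow2_dvd_Suc_unique[OF maximal x(1,2) that(1,2) x(3)] that(3) by blast
  from x maximal unique show ?thesis
    using that unfolding dyadic_peak_def by blast
qed

lemma dyadic_peak_bounds:
  assumes "dyadic_peak p q M x"
  shows "x - p < 2 ^ M" "q - x < 2 ^ M"
proof -
  from assms have x: "p \<le> x" "x \<le> q" "2 ^ M dvd Suc x"
    and unique: "\<And>j. p \<le> j \<Longrightarrow> j \<le> q \<Longrightarrow> j \<noteq> x \<Longrightarrow> \<not> 2 ^ M dvd Suc j"
    unfolding dyadic_peak_def by blast+
  show "x - p < 2 ^ M"
  proof (rule ccontr)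
    assume "\<not> x - p < 2 ^ M"
    moreover have "(0::nat) < 2 ^ M"
      by simp
    ultimately have "p \<le> x - 2 ^ M" "x - 2 ^ M \<le> q" "x - 2 ^ M \<noteq> x"
      and "Suc (x - 2 ^ M) = Suc x - 2 ^ M"
      using x(1,2) by linarith+
    with x(3) unique[of "x - 2 ^ M"] show False
      by (simp add: dvd_diff_nat)
  qed
  show "q - x < 2 ^ M"
  proof (rule ccontr)
    assume "\<not> q - x < 2 ^ M"
    moreover have "2 ^ M dvd Suc (x + 2 ^ M)"
      using dvd_add[OF x(3) dvd_refl[of "2 ^ M"]] by simp
    ultimately show False
      using unique[of "x + 2 ^ M"] x by simp
  qed
qed

lemma dyadic_peak_pow2_le:
  assumes "dyadic_peak p q M x"
  shows "2 ^ M \<le> Suc q"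
proof -
  from assms have "x \<le> q" "2 ^ M dvd Suc x"
    unfolding dyadic_peak_def by blast+
  then show ?thesis
    using dvd_imp_le[of "2 ^ M" "Suc x"] by simp
qed

lemma dyadic_peak_eq_pow2:
  assumes "dyadic_peak p q M x" "Suc x < 2 ^ Suc M"
  shows "x = 2 ^ M - 1"
proof -
  from assms(1) obtain c where c: "Suc x = 2 ^ M * c"
    unfolding dyadic_peak_def by blast
  with assms(2) have "c < 2"
    by simp
  moreover from c have "c \<noteq> 0"
    by (intro notI) simp
  ultimately have "c = 1"
    by simp
  with c show ?thesis
    by simp
qed

lemma pd_dyadic_peak:
  assumes "dyadic_peak p q M x"
  shows "pd x = (if even M then 1 else 0)"
proof -
  from assms obtain u where u: "Suc x = 2 ^ M * u" and "\<not> 2 ^ Suc M dvd Suc x"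
    unfolding dyadic_peak_def by blast
  have "odd u"
  proof
    assume "even u"
    then obtain v where "u = 2 * v" ..
    with u \<open>\<not> 2 ^ Suc M dvd Suc x\<close> show False
      by simp
  qed
  from u have "x = 2 ^ M * u - 1"
    by simp
  with pd_pow2_mult_odd[OF \<open>odd u\<close>] show ?thesis
    by simp
qed

definition factor_crosses :: "nat \<Rightarrow> nat \<Rightarrow> nat \<Rightarrow> nat \<Rightarrow> bool" where
  "factor_crosses n p q i \<longleftrightarrow> (\<exists>p'. p' \<le> i \<and> i \<le> p' + (q - p) \<and> p' + (q - p) < n \<and>
     (\<forall>t \<le> q - p. pd (p' + t) = pd (p + t)))"

lemma factor_crosses_refl: "p \<le> i \<Longrightarrow> i \<le> q \<Longrightarrow> q < n \<Longrightarrow> factor_crosses n p q i"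
  unfolding factor_crosses_def by (intro exI[of _ p]) simp

lemma factor_crosses_dyadic_peak:
  assumes peak: "dyadic_peak p q M x"
    and y: "2 ^ M dvd Suc y" "pd y = pd x" "x - p \<le> y" "y + (q - x) < n"
  shows "factor_crosses n p q y"
proof -
  from peak have x: "p \<le> x" "x \<le> q" "2 ^ M dvd Suc x"
    and unique: "\<And>j. p \<le> j \<Longrightarrow> j \<le> q \<Longrightarrow> j \<noteq> x \<Longrightarrow> \<not> 2 ^ M dvd Suc j"
    unfolding dyadic_peak_def by blast+
  define p' where "p' = y - (x - p)"
  have "[Suc y = Suc x] (mod 2 ^ M)"
    using x(3) y(1) by (simp add: cong_def dvd_eq_mod_eq_0)
  then have "[y = x] (mod 2 ^ M)"
    using cong_add_rcancel_nat[of y 1 x] by simp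
  then have "[p' + (x - p) = p + (x - p)] (mod 2 ^ M)"
    using x(1) y(3) by (simp add: p'_def)
  then have shift: "[p' = p] (mod 2 ^ M)"
    by (rule cong_add_rcancel_nat[THEN iffD1])
  have "pd (p' + t) = pd (p + t)" if "t \<le> q - p" for t
  proof (cases "p + t = x")
    case True
    with y(3) have "p' + t = y"
      by (simp add: p'_def)
    with True y(2) show ?thesis
      by simp
  next
    case False
    with that x(1,2) unique[of "p + t"] have "\<not> 2 ^ M dvd Suc (p + t)"
      by simp
    moreover have "[p + t = p' + t] (mod 2 ^ M)"
      using shift by (simp add: cong_add cong_sym)
    ultimately show ?thesis
      by (simp add: pd_cong)
  qed
  moreover have "p' \<le> y" "y \<le> p' + (q - p)" "p' + (q - p) < n"
    using x(1,2) y(3,4) by (simp_all add: p'_def)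
  ultimately show ?thesis
    unfolding factor_crosses_def by blast
qed

lemma factor_crosses_pow2_mult_odd:
  assumes peak: "dyadic_peak p q M x"
    and "M \<le> e" "even e \<longleftrightarrow> even M" "odd u" "2 ^ e * u - 1 + 2 ^ M \<le> n"
  shows "factor_crosses n p q (2 ^ e * u - 1)"
proof (rule factor_crosses_dyadic_peak[OF peak])
  have "0 < u"
    using \<open>odd u\<close> by (simp add: odd_pos)
  then have y: "Suc (2 ^ e * u - 1) = 2 ^ e * u"
    by simp
  have "(2::nat) ^ M \<le> 2 ^ e"
    using \<open>M \<le> e\<close> by (simp add: power_increasing)
  also have "\<dots> \<le> 2 ^ e * u"
    using \<open>0 < u\<close> by simp
  moreover note dyadic_peak_bounds[OF peak]
  ultimately show "x - p \<le> 2 ^ e * u - 1" "2 ^ e * u - 1 + (q - x) < n"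
    using assms(5) by linarith+
  show "2 ^ M dvd Suc (2 ^ e * u - 1)"
    unfolding y using \<open>M \<le> e\<close> by (simp add: le_imp_power_dvd)
  show "pd (2 ^ e * u - 1) = pd x"
    using pd_pow2_mult_odd[OF \<open>odd u\<close>] pd_dyadic_peak[OF peak] assms(3) by simp
qed

lemma factor_at_pd_prefix:
  assumes "p \<le> q" "q < n"
  shows "factor_at (pd_prefix n) p q = map (\<lambda>t. pd (p + t)) [0..<Suc (q - p)]"
proof -
  have "factor_at (pd_prefix n) p q = map pd [p..<Suc q]"
    using assms by (simp add: factor_at_def pd_prefix_def drop_map take_map)
  also have "[p..<Suc q] = map (\<lambda>t. p + t) [0..<Suc (q - p)]"
    using assms(1) by (simp add: map_add_upt add.commute Suc_diff_le)
  finally show ?thesis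
    by simp
qed

lemma string_attractor_pd_prefixI:
  assumes "S \<subseteq> {..<n}"
    and "\<And>p q. p \<le> q \<Longrightarrow> q < n \<Longrightarrow> \<exists>i\<in>S. factor_crosses n p q i"
  shows "string_attractor (pd_prefix n) S"
  unfolding string_attractor_def
proof (intro conjI allI impI)
  have [simp]: "length (pd_prefix n) = n"
    by (simp add: pd_prefix_def)
  show "S \<subseteq> {0..<length (pd_prefix n)}"
    using assms(1) by auto
  fix p q
  assume "p \<le> q \<and> q < length (pd_prefix n)"
  then have pq: "p \<le> q" "q < n"
    by simp_all
  then obtain i p' where i: "i \<in> S" "p' \<le> i" "i \<le> p' + (q - p)" "p' + (q - p) < n"
    and same: "\<forall>t \<le> q - p. pd (p' + t) = pd (p + t)"
    using assms(2) unfolding factor_crosses_def by blast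
  have "factor_at (pd_prefix n) p' (p' + (q - p)) = factor_at (pd_prefix n) p q"
    using pq i(4) same by (simp add: factor_at_pd_prefix del: upt_Suc)
  with i show "\<exists>p' q' i. p' \<le> q' \<and> q' < length (pd_prefix n) \<and>
      factor_at (pd_prefix n) p' q' = factor_at (pd_prefix n) p q \<and> i \<in> S \<and> p' \<le> i \<and> i \<le> q'"
    by (intro exI[of _ p'] exI[of _ "p' + (q - p)"] exI[of _ i]) simp
qed

lemma factor_crosses_three_pow2:
  assumes "p \<le> 4 * 2 ^ k - 1" "4 * 2 ^ k - 1 \<le> q" "q < n" "n < 6 * 2 ^ k"
  shows "factor_crosses n p q (2 ^ k * 3 - 1)"
proof (cases "p \<le> 2 ^ k * 3 - 1")
  case True
  with assms(2,3) show ?thesis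
    by (intro factor_crosses_refl) simp_all
next
  case False
  show ?thesis
    unfolding factor_crosses_def
  proof (intro exI[of _ "p - 2 ^ k"] conjI allI impI)
    show "p - 2 ^ k \<le> 2 ^ k * 3 - 1" "2 ^ k * 3 - 1 \<le> p - 2 ^ k + (q - p)"
      "p - 2 ^ k + (q - p) < n"
      using assms by linarith+
    fix t
    assume "t \<le> q - p"
    with False assms have "pd (p - 2 ^ k + t + 2 ^ k) = pd (p - 2 ^ k + t)"
      by (intro pd_add_pow2_eq) linarith+
    moreover from False have "p - 2 ^ k + t + 2 ^ k = p + t"
      by linarith
    ultimately show "pd (p - 2 ^ k + t) = pd (p + t)"
      by simp
  qed
qed

lemma string_attractor_pd_prefix_pow2:
  assumes n: "2 ^ (k + 1) \<le> n" "n < 2 ^ (k + 2)" "k = 0 \<or> 3 * 2 ^ k \<le> n"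
  shows "string_attractor (pd_prefix n) {2 ^ k - 1, 2 ^ (k + 1) - 1}"
proof (rule string_attractor_pd_prefixI)
  have "(0::nat) < 2 ^ k" "(2::nat) ^ (k + 1) = 2 * 2 ^ k"
    by simp_all
  with n(1) have "2 ^ (k + 1) - 1 < n" "2 ^ k - 1 < n"
    by linarith+
  then show "{2 ^ k - 1, 2 ^ (k + 1) - 1} \<subseteq> {..<n}"
    by simp
  fix p q
  assume pq: "p \<le> q" "q < n"
  then obtain M x where peak: "dyadic_peak p q M x"
    by (elim dyadic_peak_exists)
  have "(2::nat) ^ M < 2 ^ (k + 2)"
    using dyadic_peak_pow2_le[OF peak] pq(2) n(2) by linarith
  then have "M < k + 2"
    by (rule power_less_imp_less_exp[rotated]) simp
  then consider "M = k + 1" | "M \<le> k" "even M \<longleftrightarrow> even k" | "M < k" "even M \<noteq> even k"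
    by (cases "M = k + 1"; cases "M = k") auto
  then show "\<exists>i\<in>{2 ^ k - 1, 2 ^ (k + 1) - 1}. factor_crosses n p q i"
  proof cases
    case 1
    from peak have x: "p \<le> x" "x \<le> q"
      unfolding dyadic_peak_def by blast+
    with 1 pq(2) n(2) have "x = 2 ^ (k + 1) - 1"
      using dyadic_peak_eq_pow2[OF peak] by simp
    with x pq(2) show ?thesis
      using factor_crosses_refl by blast
  next
    case 2
    then have "(2::nat) ^ M \<le> 2 ^ k"
      by simp
    with n(1) have "2 ^ k * 1 - 1 + 2 ^ M \<le> n"
      by (simp only: mult_1_right power_add power_one_right; linarith)
    with peak 2 have "factor_crosses n p q (2 ^ k * 1 - 1)"
      by (intro factor_crosses_pow2_mult_odd) simp_all
    then show ?thesis
      by simp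
  next
    case 3
    then have "(2::nat) ^ M \<le> 2 ^ k" "k \<noteq> 0"
      by simp_all
    with n(3) have "2 ^ (k + 1) * 1 - 1 + 2 ^ M \<le> n"
      by (simp only: mult_1_right power_add power_one_right; linarith)
    with peak 3 have "factor_crosses n p q (2 ^ (k + 1) * 1 - 1)"
      by (intro factor_crosses_pow2_mult_odd) simp_all
    then show ?thesis
      by simp
  qed
qed

lemma string_attractor_pd_prefix_pow2_three:
  assumes n: "4 * 2 ^ k \<le> n" "n < 6 * 2 ^ k"
  shows "string_attractor (pd_prefix n) {2 ^ (k + 1) - 1, 2 ^ k * 3 - 1}"
proof (rule string_attractor_pd_prefixI)
  have pow: "(0::nat) < 2 ^ k" "(2::nat) ^ (k + 1) = 2 * 2 ^ k" "(2::nat) ^ (k + 2) = 4 * 2 ^ k"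
    "(2::nat) ^ (k + 3) = 8 * 2 ^ k"
    by (simp_all add: power_add)
  with n(1) have "2 ^ (k + 1) - 1 < n" "2 ^ k * 3 - 1 < n"
    by linarith+
  then show "{2 ^ (k + 1) - 1, 2 ^ k * 3 - 1} \<subseteq> {..<n}"
    by simp
  fix p q
  assume pq: "p \<le> q" "q < n"
  then obtain M x where peak: "dyadic_peak p q M x"
    by (elim dyadic_peak_exists)
  have "(2::nat) ^ M < 2 ^ (k + 3)"
    using dyadic_peak_pow2_le[OF peak] pq(2) n(2) pow by linarith
  then have "M < k + 3"
    by (rule power_less_imp_less_exp[rotated]) simp
  then consider "M = k + 2" | "M \<le> k + 1" "even M \<longleftrightarrow> even (k + 1)" | "M \<le> k" "even M \<longleftrightarrow> even k"
    by (cases "M = k + 2"; cases "M = k + 1") auto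
  then show "\<exists>i\<in>{2 ^ (k + 1) - 1, 2 ^ k * 3 - 1}. factor_crosses n p q i"
  proof cases
    case 1
    from peak have x: "p \<le> x" "x \<le> q"
      unfolding dyadic_peak_def by blast+
    with 1 pq(2) n(2) pow have "x = 4 * 2 ^ k - 1"
      using dyadic_peak_eq_pow2[OF peak] by simp
    with x pq(2) n(2) have "factor_crosses n p q (2 ^ k * 3 - 1)"
      by (intro factor_crosses_three_pow2) simp_all
    then show ?thesis
      by simp
  next
    case 2
    then have "(2::nat) ^ M \<le> 2 ^ (k + 1)"
      by (intro power_increasing) simp_all
    with n(1) pow have "2 ^ (k + 1) * 1 - 1 + 2 ^ M \<le> n"
      by linarith
    with peak 2 have "factor_crosses n p q (2 ^ (k + 1) * 1 - 1)"
      by (intro factor_crosses_pow2_mult_odd) simp_all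
    then show ?thesis
      by simp
  next
    case 3
    then have "(2::nat) ^ M \<le> 2 ^ k"
      by simp
    with n(1) pow have "2 ^ k * 3 - 1 + 2 ^ M \<le> n"
      by linarith
    with peak 3 have "factor_crosses n p q (2 ^ k * 3 - 1)"
      by (intro factor_crosses_pow2_mult_odd) simp_all
    then show ?thesis
      by simp
  qed
qed

lemma pd_prefix_has_string_attractor_card_2:
  assumes "2 \<le> n"
  obtains S where "string_attractor (pd_prefix n) S" "card S = 2"
proof -
  have pow: "(0::nat) < 2 ^ j" "(2::nat) ^ (j + 1) = 2 * 2 ^ j" for j
    by simp_all
  obtain e where e: "2 ^ e \<le> n" "n < 2 ^ (e + 1)"
    using ex_power_ivl1[of 2 n] assms by auto
  with assms obtain k where k: "e = k + 1"
    by (cases e) auto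
  show ?thesis
  proof (cases "k \<noteq> 0 \<and> n < 3 * 2 ^ k")
    case True
    then obtain k' where "k = k' + 1"
      by (cases k) auto
    with True e k have "4 * 2 ^ k' \<le> n" "n < 6 * 2 ^ k'"
      by simp_all
    then have "string_attractor (pd_prefix n) {2 ^ (k' + 1) - 1, 2 ^ k' * 3 - 1}"
      by (rule string_attractor_pd_prefix_pow2_three)
    moreover have "(2::nat) ^ (k' + 1) - 1 < 2 ^ k' * 3 - 1"
      using pow[of k'] by linarith
    ultimately show ?thesis
      using that by simp
  next
    case False
    with e k have "2 ^ (k + 1) \<le> n" "n < 2 ^ (k + 2)" "k = 0 \<or> 3 * 2 ^ k \<le> n"
      by auto
    then have "string_attractor (pd_prefix n) {2 ^ k - 1, 2 ^ (k + 1) - 1}"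
      by (rule string_attractor_pd_prefix_pow2)
    moreover have "(2::nat) ^ k - 1 < 2 ^ (k + 1) - 1"
      using pow[of k] by linarith
    ultimately show ?thesis
      using that by simp
  qed
qed

lemma card_string_attractor_pd_prefix_ge_2:
  assumes "2 \<le> n" "string_attractor (pd_prefix n) S"
  shows "2 \<le> card S"
proof -
  have "pd 0 \<in> set (pd_prefix n)" "pd 1 \<in> set (pd_prefix n)"
    using assms(1) unfolding pd_prefix_def set_map set_upt by (intro imageI; simp)+
  moreover have "pd 0 = 1" "pd 1 = 0"
    using pd_double[of 0] pd_Suc_double[of 0] by simp_all
  ultimately have "{0, 1} \<subseteq> set (pd_prefix n)"
    by simp
  then have "2 \<le> card (set (pd_prefix n))"
    using card_mono[of "set (pd_prefix n)" "{0, 1 :: nat}"] by simp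
  also have "\<dots> \<le> card S"
    using assms(2) by (rule card_set_le_string_attractor)
  finally show ?thesis .
qed

theorem theorem3:
  fixes n :: nat
  assumes "n \<ge> 2"
  shows "min_attractor_size (pd_prefix n) = 2"
  unfolding min_attractor_size_def
proof (rule Least_equality)
  obtain S where "string_attractor (pd_prefix n) S" "card S = 2"
    using pd_prefix_has_string_attractor_card_2[OF assms] .
  then show "\<exists>S. string_attractor (pd_prefix n) S \<and> card S = 2"
    by blast
next
  fix k
  assume "\<exists>S. string_attractor (pd_prefix n) S \<and> card S = k"
  with assms show "2 \<le> k"
    using card_string_attractor_pd_prefix_ge_2 by blast
qed

end
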